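(* Let $(\mathbf{x}^0,\mathbf{Z}^0,\Gamma^0)$ be any initialization with $\mathbf{x}^0\in\mathcal{X}$, and let $\{(\mathbf{x}^n,\mathbf{Z}^n,\Gamma^n)\}_{n\ge 0}$ be generated by the SPULTRA iteration defined in the context, where the image update step is solved exactly. Then: (i) the sequence $\{(\mathbf{x}^n,\mathbf{Z}^n,\Gamma^n)\}$ is bounded; (ii) the objective sequence $\{G(\mathbf{x}^n,\mathbf{Z}^n,\Gamma^n)\}$ is monotonically nonincreasing and converges to a finite limit $G^*=G^*(\mathbf{x}^0,\mathbf{Z}^0,\Gamma^0)$; (iii) every accumulation point $(\mathbf{x}^*,\mathbf{Z}^*,\Gamma^* )$ of the iterate sequence satisfies $G(\mathbf{x}^*,\mathbf{Z}^*,\Gamma^* )=G^*$; (iv) every accumulation point $(\mathbf{x}^*,\mathbf{Z}^*,\Gamma^* )$ satisfies the partial optimality conditions $$\mathbf{0}\in\partial_{\mathbf{x}}G(\mathbf{x},\mathbf{Z}^*,\Gamma^* )\big|_{\mathbf{x}=\mathbf{x}^*},\qquad (\mathbf{Z}^*,\Gamma^* )\in\arg\min_{\mathbf{Z},\Gamma}G(\mathbf{x}^*,\mathbf{Z},\Gamma),$$ where $\partial_{\mathbf{x}}$ denotes the (limiting) subdifferential of $G$ with respect to $\mathbf{x}$; (v) $\|\mathbf{x}^{n+1}-\mathbf{x}^n\|_2\to 0$ as $n\to\infty$.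
   Context: Data and model. $\mathbf{A}\in\mathbb{R}^{N_d\times N_p}$ is a matrix with nonnegative entries; write $l_i(\mathbf{x})=[\mathbf{A}\mathbf{x}]_i$. Constants: $I_0>0$, $\sigma^2\ge 0$, measurements $Y_i\in\mathbb{R}$, coefficients $s_{1_i},s_{2_i}\in\mathbb{R}$, $x_{\max}>0$. Let $f_i(l)=s_{1_i}l+s_{2_i}l^2$ and $$h_i(l)=\big(I_0e^{-f_i(l)}+\sigma^2\big)-Y_i\log\big(I_0e^{-f_i(l)}+\sigma^2\big),\qquad \mathsf{L}(\mathbf{x})=\sum_{i=1}^{N_d}h_i(l_i(\mathbf{x})).$$ Let $\mathcal{X}=\{\mathbf{x}\in\mathbb{R}^{N_p}:0\le x_j\le x_{\max}\ \forall j\}$ and $\mathfrak{X}(\mathbf{x})=0$ if $\mathbf{x}\in\mathcal{X}$, $+\infty$ otherwise. Regularizer. For $j=1,\dots,\tilde N$, $\mathbf{P}_j\in\mathbb{R}^{v\times N_p}$ extracts the $j$-th patch of $v$ voxels (a row-selection matrix); assume every voxel belongs to at least one patch. $\boldsymbol{\Omega}_1,\dots,\boldsymbol{\Omega}_K\in\mathbb{R}^{v\times v}$ are fixed nonsingular (pre-learned) transforms. Weights $\tau_j>0$, and $\beta>0$, $\gamma_c>0$. Variables: sparse code matrix $\mathbf{Z}=[\mathbf{z}_1,\dots,\mathbf{z}_{\tilde N}]$ with $\mathbf{z}_j\in\mathbb{R}^v$, and class vector $\Gamma\in\{1,\dots,K\}^{\tilde N}$. Define $$\mathsf{R}(\mathbf{x},\mathbf{Z},\Gamma)=\beta\sum_{j=1}^{\tilde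 N}\tau_j\Big(\|\boldsymbol{\Omega}_{\Gamma_j}\mathbf{P}_j\mathbf{x}-\mathbf{z}_j\|_2^2+\gamma_c^2\|\mathbf{z}_j\|_0\Big),$$ where $\|\cdot\|_0$ counts nonzero entries. The objective is $G(\mathbf{x},\mathbf{Z},\Gamma)=\mathsf{L}(\mathbf{x})+\mathsf{R}(\mathbf{x},\mathbf{Z},\Gamma)+\mathfrak{X}(\mathbf{x})$. Surrogates. Curvature functions $c_i:[0,\infty)\to(0,\infty)$ are continuous and chosen so that, with $$q_i(l;\bar l)=h_i(\bar l)+\dot h_i(\bar l)(l-\bar l)+\tfrac12 c_i(\bar l)(l-\bar l)^2,$$ one has $h_i(l)\le q_i(l;\bar l)$ for all $l\ge0$, $\bar l\ge 0$ (as achieved by the optimum-curvature rule $c_i(\bar l)=2\,[h_i(0)-h_i(\bar l)+\bar l\,\dot h_i(\bar l)]/\bar l^2$ for $\bar l>0$, $c_i(0)=\ddot h_i(0)$, with nonpositive values replaced by a small positive constant). For $\bar{\mathbf{x}}\in\mathcal{X}$ define the majorizer $$F(\mathbf{x},\mathbf{Z},\Gamma;\bar{\mathbf{x}})=\sum_{i=1}^{N_d}q_i\big(l_i(\mathbf{x});l_i(\bar{\mathbf{x}})\big)+\mathsf{R}(\mathbf{x},\mathbf{Z},\Gamma)+\mathfrak{X}(\mathbf{x}).$$ SPULTRA iteration (exact version). Given $(\mathbf{x}^n,\mathbf{Z}^n,\Gamma^n)$: image update $\mathbf{x}^{n+1}\in\arg\min_{\mathbf{x}}F(\mathbf{x},\mathbf{Z}^n,\Gamma^n;\mathbf{x}^n)$;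 then sparse coding and clustering $(\mathbf{Z}^{n+1},\Gamma^{n+1})\in\arg\min_{\mathbf{Z},\Gamma}\mathsf{R}(\mathbf{x}^{n+1},\mathbf{Z},\Gamma)$ (computed exactly: for each $j$, $\Gamma_j^{n+1}$ minimizes over $k$ the value $\|\boldsymbol{\Omega}_k\mathbf{P}_j\mathbf{x}^{n+1}-H_{\gamma_c}(\boldsymbol{\Omega}_k\mathbf{P}_j\mathbf{x}^{n+1})\|_2^2+\gamma_c^2\|H_{\gamma_c}(\boldsymbol{\Omega}_k\mathbf{P}_j\mathbf{x}^{n+1})\|_0$ and $\mathbf{z}_j^{n+1}=H_{\gamma_c}(\boldsymbol{\Omega}_{\Gamma_j^{n+1}}\mathbf{P}_j\mathbf{x}^{n+1})$, where $H_{\gamma_c}$ zeroes entries of magnitude less than $\gamma_c$ and keeps the others). *)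

theory Defs
  imports "HOL-Analysis.Analysis"
begin

text \<open>Index types: 'd detector bins (N_d), 'p voxels (N_p), 'v voxels per patch (v),
  'j patches (tilde N), 'k classes (K).  All finite.\<close>

definition fquad :: "real \<Rightarrow> real \<Rightarrow> real \<Rightarrow> real" where
  "fquad s1 s2 l = s1 * l + s2 * l\<^sup>2"

definition hfun :: "real \<Rightarrow> real \<Rightarrow> real \<Rightarrow> real \<Rightarrow> real \<Rightarrow> real \<Rightarrow> real" where
  "hfun I0 sigma2 Y s1 s2 l =
     (let u = I0 * exp (- fquad s1 s2 l) + sigma2 in u - Y * ln u)"

definition Lfun :: "real \<Rightarrow> real \<Rightarrow> ('d \<Rightarrow> real) \<Rightarrow> ('d \<Rightarrow> real) \<Rightarrow> ('d \<Rightarrow> real)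
     \<Rightarrow> real^'p^'d \<Rightarrow> real^'p \<Rightarrow> real" where
  "Lfun I0 sigma2 Y s1 s2 A x = (\<Sum>i\<in>UNIV. hfun I0 sigma2 (Y i) (s1 i) (s2 i) ((A *v x) $ i))"

definition qsurr :: "(real \<Rightarrow> real) \<Rightarrow> (real \<Rightarrow> real) \<Rightarrow> real \<Rightarrow> real \<Rightarrow> real" where
  "qsurr h c l lb = h lb + deriv h lb * (l - lb) + 1/2 * c lb * (l - lb)\<^sup>2"

definition Xset :: "real \<Rightarrow> (real^'p) set" where
  "Xset xmax = {x. \<forall>c. 0 \<le> x $ c \<and> x $ c \<le> xmax}"

definition l0 :: "real^'v \<Rightarrow> nat" where
  "l0 z = card {r. z $ r \<noteq> 0}"

definition hardthr :: "real \<Rightarrow> real^'v \<Rightarrow> real^'v" where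
  "hardthr g z = (\<chi> r. if \<bar>z $ r\<bar> < g then 0 else z $ r)"

definition Rfun :: "real \<Rightarrow> real \<Rightarrow> ('j \<Rightarrow> real) \<Rightarrow> ('j \<Rightarrow> real^'p^'v) \<Rightarrow> ('k \<Rightarrow> real^'v^'v)
     \<Rightarrow> real^'p \<Rightarrow> ('j \<Rightarrow> real^'v) \<Rightarrow> ('j \<Rightarrow> 'k) \<Rightarrow> real" where
  "Rfun beta gc tau P Om x Z Gm =
     beta * (\<Sum>j\<in>UNIV. tau j * ((norm (Om (Gm j) *v (P j *v x) - Z j))\<^sup>2 + gc\<^sup>2 * real (l0 (Z j))))"

definition Gobj :: "real \<Rightarrow> real \<Rightarrow> ('d \<Rightarrow> real) \<Rightarrow> ('d \<Rightarrow> real) \<Rightarrow> ('d \<Rightarrow> real)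
     \<Rightarrow> real^'p^'d \<Rightarrow> real \<Rightarrow> real \<Rightarrow> ('j \<Rightarrow> real) \<Rightarrow> ('j \<Rightarrow> real^'p^'v) \<Rightarrow> ('k \<Rightarrow> real^'v^'v)
     \<Rightarrow> real \<Rightarrow> real^'p \<Rightarrow> ('j \<Rightarrow> real^'v) \<Rightarrow> ('j \<Rightarrow> 'k) \<Rightarrow> ereal" where
  "Gobj I0 sigma2 Y s1 s2 A beta gc tau P Om xmax x Z Gm =
     (if x \<in> Xset xmax
      then ereal (Lfun I0 sigma2 Y s1 s2 A x + Rfun beta gc tau P Om x Z Gm)
      else \<infinity>)"

definition Fmaj :: "real \<Rightarrow> real \<Rightarrow> ('d \<Rightarrow> real) \<Rightarrow> ('d \<Rightarrow> real) \<Rightarrow> ('d \<Rightarrow> real)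
     \<Rightarrow> ('d \<Rightarrow> real \<Rightarrow> real)
     \<Rightarrow> real^'p^'d \<Rightarrow> real \<Rightarrow> real \<Rightarrow> ('j \<Rightarrow> real) \<Rightarrow> ('j \<Rightarrow> real^'p^'v) \<Rightarrow> ('k \<Rightarrow> real^'v^'v)
     \<Rightarrow> real \<Rightarrow> real^'p \<Rightarrow> ('j \<Rightarrow> real^'v) \<Rightarrow> ('j \<Rightarrow> 'k) \<Rightarrow> real^'p \<Rightarrow> ereal" where
  "Fmaj I0 sigma2 Y s1 s2 c A beta gc tau P Om xmax x Z Gm xb =
     (if x \<in> Xset xmax
      then ereal ((\<Sum>i\<in>UNIV. qsurr (hfun I0 sigma2 (Y i) (s1 i) (s2 i)) (c i)
                                  ((A *v x) $ i) ((A *v xb) $ i))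
                  + Rfun beta gc tau P Om x Z Gm)
      else \<infinity>)"

definition clustcost :: "real \<Rightarrow> ('j \<Rightarrow> real^'p^'v) \<Rightarrow> ('k \<Rightarrow> real^'v^'v) \<Rightarrow> real^'p \<Rightarrow> 'j \<Rightarrow> 'k \<Rightarrow> real" where
  "clustcost gc P Om x j k =
     (let w = Om k *v (P j *v x) in (norm (w - hardthr gc w))\<^sup>2 + gc\<^sup>2 * real (l0 (hardthr gc w)))"

text \<open>Frechet (regular) subdifferential of an extended-real valued function,
  written out via its epsilon-delta characterisation of
  liminf_{y->x, y~=x} (f y - f x - <v,y-x>)/|y-x| >= 0.\<close>
definition frechet_subdiff :: "('a::real_inner \<Rightarrow> ereal) \<Rightarrow> 'a \<Rightarrow> 'a set" where
  "frechet_subdiff f x = {v. \<bar>f x\<bar> \<noteq> \<infinity> \<and>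
     (\<forall>e>0. \<exists>d>0. \<forall>y. norm (y - x) < d \<longrightarrow>
        f y \<ge> f x + ereal (inner v (y - x) - e * norm (y - x)))}"

definition limiting_subdiff :: "('a::real_inner \<Rightarrow> ereal) \<Rightarrow> 'a \<Rightarrow> 'a set" where
  "limiting_subdiff f x = {v. \<exists>xs vs. xs \<longlonglongrightarrow> x \<and> (\<lambda>k. f (xs k)) \<longlonglongrightarrow> f x \<and>
      (\<forall>k. vs k \<in> frechet_subdiff f (xs k)) \<and> vs \<longlonglongrightarrow> v}"

text \<open>Accumulation point of the iterate sequence (x^n, Z^n, Gamma^n); Z is compared
  patchwise (finite index set, so this is the product topology), Gamma lives in a finite
  discrete set, so convergence means eventual equality.\<close>
definition is_accum_pt :: "(nat \<Rightarrow> real^'p) \<Rightarrow> (nat \<Rightarrow> 'j \<Rightarrow> real^'v) \<Rightarrow> (nat \<Rightarrow> 'j \<Rightarrow> 'k)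
     \<Rightarrow> real^'p \<Rightarrow> ('j \<Rightarrow> real^'v) \<Rightarrow> ('j \<Rightarrow> 'k) \<Rightarrow> bool" where
  "is_accum_pt xs Zs Gs xst Zst Gst \<longleftrightarrow>
     (\<exists>r. strict_mono r \<and> (\<lambda>n. xs (r n)) \<longlonglongrightarrow> xst \<and>
          (\<forall>j. (\<lambda>n. Zs (r n) j) \<longlonglongrightarrow> Zst j) \<and>
          (\<forall>\<^sub>F n in sequentially. Gs (r n) = Gst))"

end

theory Submission
  imports Defs
begin

text \<open>Each outer iteration is a block majorize-minimize step. The quadratic surrogates majorize
  the data term at nonnegative projections and touch it at the current image, and the sparse coding
  and clustering step minimizes the regularizer exactly, so the objective decreases. Since every
  voxel lies in some patch and the transforms are invertible, surrogate plus regularizer is strongly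
  convex in the image; comparing the new image with the midpoint of the old and the new one gives
  the sufficient decrease mu |x(n+1) - x(n)|^2 <= G(n) - G(n+1), hence steps tending to zero. Along a
  convergent subsequence the optimality of each step passes to the limit; the limit image minimizes
  its own surrogate, whose difference from the data term has vanishing derivative there, which
  makes it a critical point.\<close>

section \<open>The data-fidelity term\<close>

definition hfun_deriv :: "real \<Rightarrow> real \<Rightarrow> real \<Rightarrow> real \<Rightarrow> real \<Rightarrow> real \<Rightarrow> real" where
  "hfun_deriv I0 sigma2 Y s1 s2 l =
     (let e = I0 * exp (- fquad s1 s2 l) in - e * (s1 + 2 * s2 * l) * (1 - Y / (e + sigma2)))"

lemma hfun_has_real_derivative:
  assumes "I0 > 0" "sigma2 \<ge> 0"
  shows "(hfun I0 sigma2 Y s1 s2 has_real_derivative hfun_deriv I0 sigma2 Y s1 s2 l) (at l)"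
proof -
  have pos: "0 < I0 * exp (- (s1 * l + s2 * l\<^sup>2)) + sigma2"
    using assms by (simp add: add_pos_nonneg)
  show ?thesis
    unfolding hfun_def hfun_deriv_def fquad_def Let_def
    by (rule derivative_eq_intros refl pos | simp)+ (use pos in \<open>simp add: field_simps power2_eq_square\<close>)
qed

lemma deriv_hfun:
  assumes "I0 > 0" "sigma2 \<ge> 0"
  shows "deriv (hfun I0 sigma2 Y s1 s2) = hfun_deriv I0 sigma2 Y s1 s2"
  using DERIV_imp_deriv[OF hfun_has_real_derivative[OF assms]] by blast

lemma isCont_hfun:
  assumes "I0 > 0" "sigma2 \<ge> 0"
  shows "isCont (hfun I0 sigma2 Y s1 s2) l"
  using DERIV_isCont[OF hfun_has_real_derivative[OF assms]] .

lemma isCont_hfun_deriv: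
  assumes "I0 > 0" "sigma2 \<ge> 0"
  shows "isCont (hfun_deriv I0 sigma2 Y s1 s2) l"
proof -
  have "I0 * exp (- (s1 * t + s2 * t\<^sup>2)) + sigma2 \<noteq> 0" for t
    using assms by (smt (verit) exp_gt_zero mult_pos_pos)
  then show ?thesis
    unfolding hfun_deriv_def fquad_def Let_def by (intro continuous_intros)
qed

lemma matrix_vector_mult_nonneg:
  fixes A :: "real^'n^'m"
  assumes "\<And>i q. 0 \<le> A $ i $ q" "\<And>q. 0 \<le> x $ q"
  shows "0 \<le> (A *v x) $ i"
  using assms by (auto simp: matrix_vector_mult_def intro!: sum_nonneg)

lemma qsurr_midpoint:
  assumes "c lb \<ge> 0"
  shows "qsurr h c ((a + b) / 2) lb \<le> (qsurr h c a lb + qsurr h c b lb) / 2"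
proof -
  have "qsurr h c ((a + b) / 2) lb = (qsurr h c a lb + qsurr h c b lb) / 2 - c lb * (a - b)\<^sup>2 / 8"
    by (simp add: qsurr_def power2_eq_square field_simps)
  moreover have "0 \<le> c lb * (a - b)\<^sup>2 / 8" using assms by simp
  ultimately show ?thesis by linarith
qed

lemma Xset_eq_cbox: "Xset xmax = cbox 0 (\<chi> i. xmax)"
  by (auto simp: Xset_def mem_box_cart)

lemma midpoint_in_Xset: "x \<in> Xset xmax \<Longrightarrow> y \<in> Xset xmax \<Longrightarrow> midpoint x y \<in> Xset xmax"
  unfolding Xset_eq_cbox
  by (meson convex_box(1) convex_contains_segment midpoint_in_closed_segment subsetD)

section \<open>The regularizer\<close>

lemma power2_norm_vec: "(norm (v::real^'n))\<^sup>2 = (\<Sum>r\<in>UNIV. (v $ r)\<^sup>2)"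
  by (simp add: norm_vec_def L2_set_def sum_nonneg)

lemma l0_eq_sum: "real (l0 z) = (\<Sum>r\<in>UNIV. if z $ r \<noteq> 0 then 1 else 0)"
  by (simp add: l0_def sum.If_cases Collect_conj_eq[symmetric])

lemma hardthr_optimal:
  assumes "g > 0"
  shows "(norm (w - hardthr g w))\<^sup>2 + g\<^sup>2 * real (l0 (hardthr g w)) \<le> (norm (w - z))\<^sup>2 + g\<^sup>2 * real (l0 z)"
proof -
  have coord: "(w $ r - hardthr g w $ r)\<^sup>2 + g\<^sup>2 * (if hardthr g w $ r \<noteq> 0 then 1 else 0)
      \<le> (w $ r - z $ r)\<^sup>2 + g\<^sup>2 * (if z $ r \<noteq> 0 then 1 else 0)" for r
  proof (cases "\<bar>w $ r\<bar> < g")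
    case True
    then have "(w $ r)\<^sup>2 \<le> g\<^sup>2" by (metis abs_ge_zero less_imp_le power2_abs power_mono)
    then show ?thesis using True by (simp add: hardthr_def) (smt (verit) zero_le_power2)
  next
    case False
    then have "g\<^sup>2 \<le> (w $ r)\<^sup>2"
      using assms by (metis abs_of_pos abs_le_square_iff not_less)
    moreover have "w $ r \<noteq> 0" using False assms by auto
    ultimately show ?thesis using False by (simp add: hardthr_def)
  qed
  have "(norm (w - hardthr g w))\<^sup>2 + g\<^sup>2 * real (l0 (hardthr g w))
      = (\<Sum>r\<in>UNIV. (w $ r - hardthr g w $ r)\<^sup>2 + g\<^sup>2 * (if hardthr g w $ r \<noteq> 0 then 1 else 0))"
    by (simp add: power2_norm_vec l0_eq_sum sum.distrib sum_distrib_left)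
  also have "\<dots> \<le> (\<Sum>r\<in>UNIV. (w $ r - z $ r)\<^sup>2 + g\<^sup>2 * (if z $ r \<noteq> 0 then 1 else 0))"
    by (intro sum_mono coord)
  also have "\<dots> = (norm (w - z))\<^sup>2 + g\<^sup>2 * real (l0 z)"
    by (simp add: power2_norm_vec l0_eq_sum sum.distrib sum_distrib_left)
  finally show ?thesis .
qed

lemma Rfun_sparse_coding_minimal:
  assumes "beta \<ge> 0" "\<And>j. tau j \<ge> 0" "gc > 0"
    and "\<And>j k. clustcost gc P Om x j (Gm' j) \<le> clustcost gc P Om x j k"
    and "\<And>j. Z' j = hardthr gc (Om (Gm' j) *v (P j *v x))"
  shows "Rfun beta gc tau P Om x Z' Gm' \<le> Rfun beta gc tau P Om x Z Gm"
proof -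
  have "(norm (Om (Gm' j) *v (P j *v x) - Z' j))\<^sup>2 + gc\<^sup>2 * real (l0 (Z' j))
      \<le> (norm (Om (Gm j) *v (P j *v x) - Z j))\<^sup>2 + gc\<^sup>2 * real (l0 (Z j))" for j
  proof -
    have "(norm (Om (Gm' j) *v (P j *v x) - Z' j))\<^sup>2 + gc\<^sup>2 * real (l0 (Z' j))
        = clustcost gc P Om x j (Gm' j)"
      using assms(5) by (simp add: clustcost_def Let_def)
    also have "\<dots> \<le> clustcost gc P Om x j (Gm j)" by (rule assms(4))
    also have "\<dots> \<le> (norm (Om (Gm j) *v (P j *v x) - Z j))\<^sup>2 + gc\<^sup>2 * real (l0 (Z j))"
      unfolding clustcost_def Let_def by (rule hardthr_optimal[OF assms(3)])
    finally show ?thesis .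
  qed
  then show ?thesis
    unfolding Rfun_def using assms(1,2) by (intro mult_left_mono sum_mono) auto
qed

lemma Rfun_nonneg:
  assumes "beta \<ge> 0" "\<And>j. tau j \<ge> 0"
  shows "0 \<le> Rfun beta gc tau P Om x Z Gm"
  unfolding Rfun_def using assms by (auto intro!: mult_nonneg_nonneg sum_nonneg)

lemma norm_midpoint_sq:
  fixes u v :: "'a::real_inner"
  shows "(norm (midpoint u v))\<^sup>2 = ((norm u)\<^sup>2 + (norm v)\<^sup>2) / 2 - (norm (u - v))\<^sup>2 / 4"
  by (simp add: midpoint_def power2_norm_eq_inner inner_add inner_diff inner_commute algebra_simps)
    (simp add: field_simps)

lemma Rfun_midpoint:
  "Rfun beta gc tau P Om (midpoint x y) Z Gm =
     (Rfun beta gc tau P Om x Z Gm + Rfun beta gc tau P Om y Z Gm) / 2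
     - beta / 4 * (\<Sum>j\<in>UNIV. tau j * (norm (Om (Gm j) *v (P j *v (x - y))))\<^sup>2)"
proof -
  have "Om (Gm j) *v (P j *v midpoint x y) - Z j
      = midpoint (Om (Gm j) *v (P j *v x) - Z j) (Om (Gm j) *v (P j *v y) - Z j)" for j
    by (simp add: midpoint_def matrix_vector_mult_scaleR matrix_vector_right_distrib vec_eq_iff field_simps)
  then have patch: "tau j * ((norm (Om (Gm j) *v (P j *v midpoint x y) - Z j))\<^sup>2 + gc\<^sup>2 * real (l0 (Z j)))
      = (tau j * ((norm (Om (Gm j) *v (P j *v x) - Z j))\<^sup>2 + gc\<^sup>2 * real (l0 (Z j)))
         + tau j * ((norm (Om (Gm j) *v (P j *v y) - Z j))\<^sup>2 + gc\<^sup>2 * real (l0 (Z j)))) / 2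
        - tau j * (norm (Om (Gm j) *v (P j *v (x - y))))\<^sup>2 / 4" for j
    by (simp add: norm_midpoint_sq matrix_vector_mult_diff_distrib field_simps)
  show ?thesis
    unfolding Rfun_def patch sum_subtractf sum_divide_distrib[symmetric] sum.distrib
    by (simp add: algebra_simps)
qed

lemma invertible_matrices_bounded_below:
  fixes M :: "'k::finite \<Rightarrow> real^'v::finite^'v"
  assumes "\<And>k. invertible (M k)"
  obtains b where "b > 0" "\<And>k w. b * norm w \<le> norm (M k *v w)"
proof -
  have "\<exists>b>0. \<forall>w. b * norm w \<le> norm (M k *v w)" for k
  proof -
    have "inj ((*v) (M k))"
      using assms by (simp add: invertible_left_inverse matrix_left_invertible_injective)
    then show ?thesis
      by (metis linear_inj_bounded_below_pos matrix_vector_mul_linear)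
  qed
  then obtain b where b: "\<And>k. b k > 0" "\<And>k w. b k * norm w \<le> norm (M k *v w)" by metis
  show thesis
  proof
    show "Min (range b) > 0" using b(1) by simp
    show "Min (range b) * norm w \<le> norm (M k *v w)" for k w
      by (rule order_trans[OF mult_right_mono b(2)]) auto
  qed
qed

lemma norm_sq_le_patch_sum:
  fixes P :: "'j::finite \<Rightarrow> real^'p::finite^'v::finite"
  assumes "\<And>q. \<exists>j r. P j $ r = axis q 1"
  shows "(norm d)\<^sup>2 \<le> real CARD('p) * (\<Sum>j\<in>UNIV. (norm (P j *v d))\<^sup>2)"
proof -
  have "(d $ q)\<^sup>2 \<le> (\<Sum>j\<in>UNIV. (norm (P j *v d))\<^sup>2)" for q
  proof -
    obtain j r where jr: "P j $ r = axis q 1" using assms by blast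
    have "(d $ q)\<^sup>2 = ((P j *v d) $ r)\<^sup>2"
      by (simp add: matrix_vector_mul_component jr inner_axis')
    also have "\<dots> \<le> (norm (P j *v d))\<^sup>2"
      by (metis abs_ge_zero component_le_norm_cart power2_abs power_mono)
    also have "\<dots> \<le> (\<Sum>j\<in>UNIV. (norm (P j *v d))\<^sup>2)"
      by (rule member_le_sum) auto
    finally show ?thesis .
  qed
  then have "(\<Sum>q\<in>UNIV. (d $ q)\<^sup>2) \<le> (\<Sum>q\<in>(UNIV::'p set). \<Sum>j\<in>UNIV. (norm (P j *v d))\<^sup>2)"
    by (intro sum_mono)
  then show ?thesis by (simp add: power2_norm_vec)
qed

lemma patch_transforms_coercive:
  fixes P :: "'j::finite \<Rightarrow> real^'p::finite^'v::finite" and Om :: "'k::finite \<Rightarrow> real^'v^'v"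
  assumes "\<And>j. tau j > 0" "\<And>k. invertible (Om k)" "\<And>q. \<exists>j r. P j $ r = axis q 1"
  obtains \<kappa> where "\<kappa> > 0"
    "\<And>(Gm :: 'j \<Rightarrow> 'k) d. \<kappa> * (norm d)\<^sup>2 \<le> (\<Sum>j\<in>UNIV. tau j * (norm (Om (Gm j) *v (P j *v d)))\<^sup>2)"
proof -
  obtain b where b: "b > 0" "\<And>k w. b * norm w \<le> norm (Om k *v w)"
    using invertible_matrices_bounded_below[of Om] assms(2) by blast
  define t where "t = Min (range tau)"
  have t: "t > 0" "\<And>j. t \<le> tau j"
    using assms(1) by (auto simp: t_def)
  show thesis
  proof
    show "t * b\<^sup>2 / CARD('p) > 0" using t b by simp
    show "t * b\<^sup>2 / CARD('p) * (norm d)\<^sup>2 \<le> (\<Sum>j\<in>UNIV. tau j * (norm (Om (Gm j) *v (P j *v d)))\<^sup>2)"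
      for Gm :: "'j \<Rightarrow> 'k" and d
    proof -
      have "t * b\<^sup>2 / CARD('p) * (norm d)\<^sup>2
          \<le> t * b\<^sup>2 / CARD('p) * (CARD('p) * (\<Sum>j\<in>UNIV. (norm (P j *v d))\<^sup>2))"
        using t by (intro mult_left_mono norm_sq_le_patch_sum assms(3)) auto
      also have "\<dots> = (\<Sum>j\<in>UNIV. t * (b * norm (P j *v d))\<^sup>2)"
        by (simp add: sum_distrib_left power_mult_distrib mult.assoc)
      also have "\<dots> \<le> (\<Sum>j\<in>UNIV. tau j * (norm (Om (Gm j) *v (P j *v d)))\<^sup>2)"
      proof (intro sum_mono mult_mono power_mono)
        show "b * norm (P j *v d) \<le> norm (Om (Gm j) *v (P j *v d))" for j by (rule b(2))
      qed (use t b assms(1) in \<open>auto intro: less_imp_le\<close>)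
      finally show ?thesis .
    qed
  qed
qed

lemma hardthr_zero_or_ge: "hardthr g w $ r = 0 \<or> g \<le> \<bar>hardthr g w $ r\<bar>"
  by (simp add: hardthr_def)

lemma bounded_hardthr_image: "bounded T \<Longrightarrow> bounded (hardthr g ` T)"
proof -
  assume "bounded T"
  then obtain a where a: "\<And>w. w \<in> T \<Longrightarrow> norm w \<le> a" by (auto simp: bounded_iff)
  have "norm (hardthr g w) \<le> norm w" for w
    by (rule norm_le_componentwise_cart) (simp add: hardthr_def)
  then show ?thesis
    unfolding bounded_iff using a by (intro exI[of _ a]) (auto intro: order_trans)
qed

lemma l0_eventually_eq:
  fixes zk :: "nat \<Rightarrow> real^'v::finite"
  assumes "zk \<longlonglongrightarrow> z" "g > 0" "\<forall>\<^sub>F n in sequentially. \<forall>r. zk n $ r = 0 \<or> g \<le> \<bar>zk n $ r\<bar>"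
  shows "\<forall>\<^sub>F n in sequentially. l0 (zk n) = l0 z"
proof -
  have "\<forall>\<^sub>F n in sequentially. (zk n $ r = 0) = (z $ r = 0)" for r
  proof -
    have lim: "(\<lambda>n. zk n $ r) \<longlonglongrightarrow> z $ r" by (intro tendsto_vec_nth assms(1))
    show ?thesis
    proof (cases "z $ r = 0")
      case True
      then have "\<forall>\<^sub>F n in sequentially. dist (zk n $ r) 0 < g"
        using lim assms(2) by (auto simp: tendsto_iff)
      from eventually_conj[OF this assms(3)] show ?thesis
        by (rule eventually_mono) (use True in \<open>force simp: dist_real_def\<close>)
    next
      case False
      then have "\<forall>\<^sub>F n in sequentially. dist (zk n $ r) (z $ r) < \<bar>z $ r\<bar>"
        using lim by (auto simp: tendsto_iff)
      then show ?thesis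
        by (rule eventually_mono) (use False in \<open>auto simp: dist_real_def\<close>)
    qed
  qed
  then have "\<forall>\<^sub>F n in sequentially. \<forall>r. (zk n $ r = 0) = (z $ r = 0)"
    by (rule eventually_all_finite)
  then show ?thesis by eventually_elim (simp add: l0_def)
qed

lemma tendsto_Rfun:
  assumes "(yk \<longlongrightarrow> y) F" "\<And>j. ((\<lambda>n. Zk n j) \<longlongrightarrow> Z j) F"
    and "\<forall>\<^sub>F n in F. \<forall>j. l0 (Zk n j) = l0 (Z j)"
  shows "((\<lambda>n. Rfun beta gc tau P Om (yk n) (Zk n) Gm) \<longlongrightarrow> Rfun beta gc tau P Om y Z Gm) F"
proof -
  have "((\<lambda>n. real (l0 (Zk n j))) \<longlongrightarrow> real (l0 (Z j))) F" for j
    using assms(3) by (intro tendsto_eventually) (auto elim: eventually_mono)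
  then show ?thesis
    unfolding Rfun_def
    by (intro tendsto_intros bounded_linear.tendsto[OF matrix_vector_mul_bounded_linear] assms(1,2))
qed

section \<open>Subdifferentials\<close>

lemma zero_in_frechet_subdiffI:
  fixes f :: "'a::real_inner \<Rightarrow> ereal"
  assumes "f x = ereal a" "(E has_derivative (\<lambda>_. 0)) (at x)" "E x = 0"
    and "\<And>y. f x \<le> f y + ereal (E y)"
  shows "0 \<in> frechet_subdiff f x"
  unfolding frechet_subdiff_def
proof (intro CollectI conjI allI impI)
  show "\<bar>f x\<bar> \<noteq> \<infinity>" using assms(1) by simp
  fix e :: real assume "e > 0"
  then obtain d where "d > 0" and d: "\<And>y. norm (y - x) < d \<Longrightarrow> \<bar>E y\<bar> \<le> e * norm (y - x)"
    using assms(2,3) unfolding has_derivative_at_alt by force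
  have "f x + ereal (inner 0 (y - x) - e * norm (y - x)) \<le> f y" if "norm (y - x) < d" for y
    using assms(1) assms(4)[of y] d[OF that] by (cases "f y") auto
  with \<open>d > 0\<close> show "\<exists>d>0. \<forall>y. norm (y - x) < d \<longrightarrow>
      f x + ereal (inner 0 (y - x) - e * norm (y - x)) \<le> f y" by blast
qed

lemma frechet_subdiff_subset_limiting_subdiff: "frechet_subdiff f x \<subseteq> limiting_subdiff f x"
  unfolding limiting_subdiff_def by (force intro: exI[of _ "\<lambda>_. x"])

locale spultra_problem =
  fixes A :: "real^'p::finite^'d::finite"
    and I0 sigma2 xmax beta gc :: real
    and Y s1 s2 :: "'d \<Rightarrow> real"
    and c :: "'d \<Rightarrow> real \<Rightarrow> real"
    and P :: "'j::finite \<Rightarrow> real^'p^'v::finite"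
    and Om :: "'k::finite \<Rightarrow> real^'v^'v"
    and tau :: "'j \<Rightarrow> real"
  assumes A_nonneg: "\<And>i q. 0 \<le> A $ i $ q"
    and I0_pos: "I0 > 0" and sigma2_nonneg: "sigma2 \<ge> 0" and xmax_nonneg: "xmax \<ge> 0"
    and beta_pos: "beta > 0" and gc_pos: "gc > 0" and tau_pos: "\<And>j. tau j > 0"
    and P_cover: "\<And>q. \<exists>j r. P j $ r = axis q 1"
    and Om_invertible: "\<And>k. invertible (Om k)"
    and c_cont: "\<And>i. continuous_on {0..} (c i)"
    and c_nonneg: "\<And>i l. 0 \<le> l \<Longrightarrow> c i l \<ge> 0"
    and c_majorizes: "\<And>i l lb. 0 \<le> l \<Longrightarrow> 0 \<le> lb \<Longrightarrow>
      hfun I0 sigma2 (Y i) (s1 i) (s2 i) l \<le> qsurr (hfun I0 sigma2 (Y i) (s1 i) (s2 i)) (c i) l lb"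
begin

abbreviation X :: "(real^'p) set" where "X \<equiv> Xset xmax"
abbreviation "h i \<equiv> hfun I0 sigma2 (Y i) (s1 i) (s2 i)"
abbreviation "L \<equiv> Lfun I0 sigma2 Y s1 s2 A"
abbreviation "R \<equiv> Rfun beta gc tau P Om"
abbreviation "G \<equiv> Gobj I0 sigma2 Y s1 s2 A beta gc tau P Om xmax"
abbreviation "F \<equiv> Fmaj I0 sigma2 Y s1 s2 c A beta gc tau P Om xmax"

definition surrogate :: "real^'p \<Rightarrow> real^'p \<Rightarrow> real" where
  "surrogate xb x = (\<Sum>i\<in>UNIV. qsurr (h i) (c i) ((A *v x) $ i) ((A *v xb) $ i))"

lemma zero_in_X: "0 \<in> X"
  using xmax_nonneg by (simp add: Xset_def)

lemma projection_nonneg: "x \<in> X \<Longrightarrow> 0 \<le> (A *v x) $ i"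
  by (rule matrix_vector_mult_nonneg) (use A_nonneg in \<open>auto simp: Xset_def\<close>)

lemma F_eq: "F x Z Gm xb = (if x \<in> X then ereal (surrogate xb x + R x Z Gm) else \<infinity>)"
  by (simp add: Fmaj_def surrogate_def)

lemma surrogate_self: "surrogate x x = L x"
  by (simp add: surrogate_def Lfun_def qsurr_def)

lemma L_le_surrogate: "x \<in> X \<Longrightarrow> xb \<in> X \<Longrightarrow> L x \<le> surrogate xb x"
  unfolding Lfun_def surrogate_def by (intro sum_mono c_majorizes projection_nonneg)

lemma surrogate_midpoint:
  assumes "xb \<in> X"
  shows "surrogate xb (midpoint x y) \<le> (surrogate xb x + surrogate xb y) / 2"
proof -
  have mid: "(A *v midpoint x y) $ i = ((A *v x) $ i + (A *v y) $ i) / 2" for i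
    by (simp add: midpoint_def matrix_vector_mult_scaleR matrix_vector_right_distrib)
  have "surrogate xb (midpoint x y)
      \<le> (\<Sum>i\<in>UNIV. (qsurr (h i) (c i) ((A *v x) $ i) ((A *v xb) $ i)
                     + qsurr (h i) (c i) ((A *v y) $ i) ((A *v xb) $ i)) / 2)"
    unfolding surrogate_def mid
    by (intro sum_mono qsurr_midpoint c_nonneg projection_nonneg assms)
  then show ?thesis
    by (simp add: surrogate_def sum.distrib sum_divide_distrib[symmetric])
qed

lemma surrogate_strongly_convex:
  obtains \<mu> where "\<mu> > 0"
    "\<And>(xb :: real^'p) Z Gm x y. xb \<in> X \<Longrightarrow>
       surrogate xb (midpoint x y) + R (midpoint x y) Z Gm
       \<le> (surrogate xb x + R x Z Gm + (surrogate xb y + R y Z Gm)) / 2 - \<mu> * (norm (x - y))\<^sup>2"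
proof -
  obtain \<kappa> where "\<kappa> > 0"
    and \<kappa>: "\<And>Gm d. \<kappa> * (norm d)\<^sup>2 \<le> (\<Sum>j\<in>UNIV. tau j * (norm (Om (Gm j) *v (P j *v d)))\<^sup>2)"
    using patch_transforms_coercive[of tau Om P] tau_pos Om_invertible P_cover by blast
  show thesis
  proof
    show "beta * \<kappa> / 4 > 0" using beta_pos \<open>\<kappa> > 0\<close> by simp
    fix xb Z Gm x y assume "xb \<in> X"
    have "beta / 4 * (\<kappa> * (norm (x - y))\<^sup>2)
        \<le> beta / 4 * (\<Sum>j\<in>UNIV. tau j * (norm (Om (Gm j) *v (P j *v (x - y))))\<^sup>2)"
      using beta_pos by (intro mult_left_mono \<kappa>) auto
    then show "surrogate xb (midpoint x y) + R (midpoint x y) Z Gm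
       \<le> (surrogate xb x + R x Z Gm + (surrogate xb y + R y Z Gm)) / 2 - beta * \<kappa> / 4 * (norm (x - y))\<^sup>2"
      using surrogate_midpoint[OF \<open>xb \<in> X\<close>, of x y] Rfun_midpoint[of beta gc tau P Om x y Z Gm]
      by (simp add: field_simps)
  qed
qed

lemma isCont_L: "isCont L x"
  unfolding Lfun_def
  by (intro continuous_intros isCont_o2[OF _ isCont_hfun[OF I0_pos sigma2_nonneg]])

lemma L_bounded_below: "\<exists>B. \<forall>x\<in>X. B \<le> L x"
proof -
  have "\<exists>x\<in>X. \<forall>y\<in>X. L x \<le> L y"
    by (rule continuous_attains_inf)
      (use zero_in_X isCont_L in \<open>auto simp: Xset_eq_cbox intro!: continuous_at_imp_continuous_on\<close>)
  then show ?thesis by blast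
qed

lemma tendsto_surrogate:
  assumes "xbk \<longlonglongrightarrow> xb" "yk \<longlonglongrightarrow> y" "\<And>n. xbk n \<in> X" "xb \<in> X"
  shows "(\<lambda>n. surrogate (xbk n) (yk n)) \<longlonglongrightarrow> surrogate xb y"
  unfolding surrogate_def
proof (intro tendsto_sum)
  fix i
  have lb: "(\<lambda>n. (A *v xbk n) $ i) \<longlonglongrightarrow> (A *v xb) $ i"
    by (intro tendsto_vec_nth bounded_linear.tendsto[OF matrix_vector_mul_bounded_linear] assms(1))
  have "(\<lambda>n. c i ((A *v xbk n) $ i)) \<longlonglongrightarrow> c i ((A *v xb) $ i)"
    by (rule continuous_on_tendsto_compose[OF c_cont lb])
      (use projection_nonneg assms(3,4) in auto)
  then show "(\<lambda>n. qsurr (h i) (c i) ((A *v yk n) $ i) ((A *v xbk n) $ i))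
      \<longlonglongrightarrow> qsurr (h i) (c i) ((A *v y) $ i) ((A *v xb) $ i)"
    unfolding qsurr_def deriv_hfun[OF I0_pos sigma2_nonneg]
    by (intro tendsto_intros lb isCont_tendsto_compose[OF isCont_hfun[OF I0_pos sigma2_nonneg]]
        isCont_tendsto_compose[OF isCont_hfun_deriv[OF I0_pos sigma2_nonneg]]
        bounded_linear.tendsto[OF matrix_vector_mul_bounded_linear] assms(2))
qed

lemma surrogate_minus_L_has_derivative: "((\<lambda>y. surrogate x y - L y) has_derivative (\<lambda>_. 0)) (at x)"
proof -
  have coord: "((\<lambda>y. qsurr (h i) (c i) ((A *v y) $ i) ((A *v x) $ i) - h i ((A *v y) $ i))
      has_derivative (\<lambda>_. 0)) (at x)" for i
  proof -
    let ?lb = "(A *v x) $ i"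
    have "((\<lambda>t. qsurr (h i) (c i) t ?lb - h i t) has_real_derivative 0) (at ?lb)"
      unfolding qsurr_def deriv_hfun[OF I0_pos sigma2_nonneg]
      by (auto intro!: derivative_eq_intros hfun_has_real_derivative[OF I0_pos sigma2_nonneg])
    moreover have "(*) 0 = (\<lambda>_::real. 0::real)" by auto
    ultimately have "((\<lambda>t. qsurr (h i) (c i) t ?lb - h i t) has_derivative (\<lambda>_. 0)) (at ?lb)"
      by (simp add: has_field_derivative_def)
    moreover have "bounded_linear (\<lambda>y. (A *v y) $ i)"
      by (rule bounded_linear_compose[OF bounded_linear_vec_nth matrix_vector_mul_bounded_linear])
    ultimately show ?thesis
      using has_derivative_compose[OF bounded_linear_imp_has_derivative] by fastforce
  qed
  show ?thesis
    using has_derivative_sum[of UNIV "\<lambda>i y. qsurr (h i) (c i) ((A *v y) $ i) ((A *v x) $ i) - h i ((A *v y) $ i)"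
        "\<lambda>_ _. 0" "at x"] coord
    by (simp add: surrogate_def Lfun_def sum_subtractf)
qed

end

section \<open>Convergence of the iteration\<close>

locale spultra_iteration = spultra_problem A I0 sigma2 xmax beta gc Y s1 s2 c P Om tau
  for A :: "real^'p::finite^'d::finite"
    and I0 sigma2 xmax beta gc :: real
    and Y s1 s2 :: "'d \<Rightarrow> real"
    and c :: "'d \<Rightarrow> real \<Rightarrow> real"
    and P :: "'j::finite \<Rightarrow> real^'p^'v::finite"
    and Om :: "'k::finite \<Rightarrow> real^'v^'v"
    and tau :: "'j \<Rightarrow> real" +
  fixes xs :: "nat \<Rightarrow> real^'p" and Zs :: "nat \<Rightarrow> 'j \<Rightarrow> real^'v" and Gs :: "nat \<Rightarrow> 'j \<Rightarrow> 'k"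
  assumes init: "xs 0 \<in> Xset xmax"
    and x_update: "\<And>n y. Fmaj I0 sigma2 Y s1 s2 c A beta gc tau P Om xmax (xs (Suc n)) (Zs n) (Gs n) (xs n)
                        \<le> Fmaj I0 sigma2 Y s1 s2 c A beta gc tau P Om xmax y (Zs n) (Gs n) (xs n)"
    and Gamma_update: "\<And>n j k. clustcost gc P Om (xs (Suc n)) j (Gs (Suc n) j)
                                 \<le> clustcost gc P Om (xs (Suc n)) j k"
    and Z_update: "\<And>n j. Zs (Suc n) j = hardthr gc (Om (Gs (Suc n) j) *v (P j *v xs (Suc n)))"
begin

definition obj :: "nat \<Rightarrow> real" where
  "obj n = L (xs n) + R (xs n) (Zs n) (Gs n)"

lemma xs_in_X: "xs n \<in> X"
proof (cases n)
  case (Suc m)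
  have "F (xs (Suc m)) (Zs m) (Gs m) (xs m) \<le> F 0 (Zs m) (Gs m) (xs m)" by (rule x_update)
  then show ?thesis using Suc zero_in_X by (auto simp: F_eq split: if_splits)
qed (simp add: init)

lemma G_iterate: "G (xs n) (Zs n) (Gs n) = ereal (obj n)"
  using xs_in_X by (simp add: Gobj_def obj_def)

lemma x_update_minimizes:
  "y \<in> X \<Longrightarrow> surrogate (xs n) (xs (Suc n)) + R (xs (Suc n)) (Zs n) (Gs n)
     \<le> surrogate (xs n) y + R y (Zs n) (Gs n)"
  using x_update[of n y] xs_in_X[of "Suc n"] by (simp add: F_eq)

lemma Z_Gamma_update_minimizes: "0 < n \<Longrightarrow> R (xs n) (Zs n) (Gs n) \<le> R (xs n) Z Gm"
  using beta_pos tau_pos gc_pos Gamma_update[of "n - 1"] Z_update[of "n - 1"]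
  by (intro Rfun_sparse_coding_minimal) (auto intro: less_imp_le)

lemma Zs_entries_zero_or_ge: "0 < n \<Longrightarrow> Zs n j $ q = 0 \<or> gc \<le> \<bar>Zs n j $ q\<bar>"
  using Z_update[of "n - 1" j] hardthr_zero_or_ge by simp

lemma obj_Suc_le_surrogate:
  "obj (Suc n) \<le> surrogate (xs n) (xs (Suc n)) + R (xs (Suc n)) (Zs n) (Gs n)"
  using Z_Gamma_update_minimizes[of "Suc n" "Zs n" "Gs n"] L_le_surrogate[OF xs_in_X xs_in_X, of "Suc n" n]
  by (simp add: obj_def)

lemma obj_sufficient_decrease:
  obtains \<mu> where "\<mu> > 0" "\<And>n. \<mu> * (norm (xs (Suc n) - xs n))\<^sup>2 \<le> obj n - obj (Suc n)"
proof -
  obtain \<mu> where "\<mu> > 0" and \<mu>: "\<And>(xb :: real^'p) Z Gm x y. xb \<in> X \<Longrightarrow>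
       surrogate xb (midpoint x y) + R (midpoint x y) Z Gm
       \<le> (surrogate xb x + R x Z Gm + (surrogate xb y + R y Z Gm)) / 2 - \<mu> * (norm (x - y))\<^sup>2"
    using surrogate_strongly_convex by blast
  show thesis
  proof
    show "2 * \<mu> > 0" using \<open>\<mu> > 0\<close> by simp
    fix n
    define S where "S y = surrogate (xs n) y + R y (Zs n) (Gs n)" for y
    have "S (xs (Suc n)) \<le> S (midpoint (xs n) (xs (Suc n)))"
      unfolding S_def by (intro x_update_minimizes midpoint_in_Xset xs_in_X)
    also have "\<dots> \<le> (S (xs n) + S (xs (Suc n))) / 2 - \<mu> * (norm (xs n - xs (Suc n)))\<^sup>2"
      unfolding S_def by (rule \<mu>[OF xs_in_X])
    finally have "2 * \<mu> * (norm (xs (Suc n) - xs n))\<^sup>2 \<le> S (xs n) - S (xs (Suc n))"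
      by (simp add: norm_minus_commute field_simps)
    moreover have "S (xs n) = obj n" by (simp add: S_def obj_def surrogate_self)
    moreover have "obj (Suc n) \<le> S (xs (Suc n))" unfolding S_def by (rule obj_Suc_le_surrogate)
    ultimately show "2 * \<mu> * (norm (xs (Suc n) - xs n))\<^sup>2 \<le> obj n - obj (Suc n)" by linarith
  qed
qed

lemma obj_decreasing: "obj (Suc n) \<le> obj n"
proof -
  obtain \<mu> where "\<mu> > 0" "\<mu> * (norm (xs (Suc n) - xs n))\<^sup>2 \<le> obj n - obj (Suc n)"
    using obj_sufficient_decrease by metis
  then show ?thesis by (smt (verit) mult_nonneg_nonneg zero_le_power2)
qed

lemma obj_bounded_below: "\<exists>B. \<forall>n. B \<le> obj n"
proof -
  obtain B where "\<And>x. x \<in> X \<Longrightarrow> B \<le> L x" using L_bounded_below by blast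
  then have "B \<le> obj n" for n
    using xs_in_X[of n] Rfun_nonneg[of beta tau gc P Om "xs n" "Zs n" "Gs n"] beta_pos tau_pos
    by (fastforce simp: obj_def intro: less_imp_le)
  then show ?thesis by blast
qed

lemma obj_tendsto: "obj \<longlonglongrightarrow> lim obj"
proof -
  obtain B where B: "\<forall>n. B \<le> obj n" using obj_bounded_below by blast
  have "decseq obj" using obj_decreasing by (rule decseq_SucI)
  then have "convergent obj"
    using decseq_convergent[of obj B] B unfolding convergent_def by blast
  then show ?thesis by (simp add: convergent_LIMSEQ_iff)
qed

lemma step_tendsto_zero: "(\<lambda>n. norm (xs (Suc n) - xs n)) \<longlonglongrightarrow> 0"
proof -
  obtain \<mu> where "\<mu> > 0" and \<mu>: "\<And>n. \<mu> * (norm (xs (Suc n) - xs n))\<^sup>2 \<le> obj n - obj (Suc n)"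
    using obj_sufficient_decrease by metis
  have "(\<lambda>n. obj n - obj (Suc n)) \<longlonglongrightarrow> lim obj - lim obj"
    by (intro tendsto_diff obj_tendsto LIMSEQ_Suc)
  then have lim: "(\<lambda>n. sqrt ((obj n - obj (Suc n)) / \<mu>)) \<longlonglongrightarrow> 0"
    using tendsto_real_sqrt[OF tendsto_divide[OF _ tendsto_const]] \<open>\<mu> > 0\<close> by fastforce
  have "norm (xs (Suc n) - xs n) \<le> sqrt ((obj n - obj (Suc n)) / \<mu>)" for n
    using \<mu>[of n] \<open>\<mu> > 0\<close> by (intro real_le_rsqrt) (simp add: field_simps)
  then show ?thesis
    by (intro tendsto_sandwich[OF _ _ tendsto_const lim]) auto
qed

lemma bounded_xs: "bounded (range xs)"
  using xs_in_X by (intro bounded_subset[OF bounded_cbox[of 0 "\<chi> i. xmax"]]) (auto simp: Xset_eq_cbox)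

lemma bounded_Zs: "bounded (range (\<lambda>n. Zs n j))"
proof -
  let ?T = "\<Union>k. (\<lambda>x. Om k *v (P j *v x)) ` X"
  have "bounded ?T"
    by (intro bounded_Union ballI)
      (auto intro!: bounded_linear_image bounded_linear_compose[OF matrix_vector_mul_bounded_linear
          matrix_vector_mul_bounded_linear] simp: Xset_eq_cbox)
  then have "bounded (insert (Zs 0 j) (hardthr gc ` ?T))"
    by (simp add: bounded_hardthr_image)
  moreover have "range (\<lambda>n. Zs n j) \<subseteq> insert (Zs 0 j) (hardthr gc ` ?T)"
  proof (rule image_subsetI)
    fix n
    show "Zs n j \<in> insert (Zs 0 j) (hardthr gc ` ?T)"
    proof (cases n)
      case (Suc m)
      have "Om (Gs (Suc m) j) *v (P j *v xs (Suc m)) \<in> ?T" using xs_in_X by blast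
      then show ?thesis unfolding Suc Z_update by blast
    qed simp
  qed
  ultimately show ?thesis by (rule bounded_subset)
qed

context
  fixes r :: "nat \<Rightarrow> nat" and xst :: "real^'p" and Zst :: "'j \<Rightarrow> real^'v" and Gmst :: "'j \<Rightarrow> 'k"
  assumes r: "strict_mono r" and xs_r: "(\<lambda>n. xs (r n)) \<longlonglongrightarrow> xst"
    and Zs_r: "\<And>j. (\<lambda>n. Zs (r n) j) \<longlonglongrightarrow> Zst j"
    and Gs_r: "\<forall>\<^sub>F n in sequentially. Gs (r n) = Gmst"
begin

lemma eventually_r_pos: "\<forall>\<^sub>F n in sequentially. 0 < r n"
proof (rule eventually_sequentiallyI)
  fix n :: nat assume "1 \<le> n"
  then show "0 < r n" using seq_suble[OF r, of n] by linarith
qed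

lemma limit_in_X: "xst \<in> X"
  using xs_in_X by (intro closed_sequentially[OF _ _ xs_r]) (auto simp: Xset_eq_cbox)

lemma xs_Suc_r_tendsto: "(\<lambda>n. xs (Suc (r n))) \<longlonglongrightarrow> xst"
proof -
  have "(\<lambda>n. norm (xs (Suc (r n)) - xs (r n))) \<longlonglongrightarrow> 0"
    using LIMSEQ_subseq_LIMSEQ[OF step_tendsto_zero r] by (simp add: o_def)
  then have "(\<lambda>n. xs (Suc (r n)) - xs (r n)) \<longlonglongrightarrow> 0" by (simp add: tendsto_norm_zero_iff)
  from tendsto_add[OF xs_r this] show ?thesis by simp
qed

text \<open>Hard-thresholded codes have no entries of magnitude in \<open>(0, gc)\<close>, so their supports
  stabilize along a convergent subsequence and the l0 terms behave continuously.\<close>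
lemma eventually_l0_Zs_r: "\<forall>\<^sub>F n in sequentially. \<forall>j. l0 (Zs (r n) j) = l0 (Zst j)"
proof (intro eventually_all_finite allI)
  fix j
  have "\<forall>\<^sub>F n in sequentially. \<forall>q. Zs (r n) j $ q = 0 \<or> gc \<le> \<bar>Zs (r n) j $ q\<bar>"
    using eventually_r_pos by eventually_elim (simp add: Zs_entries_zero_or_ge)
  then show "\<forall>\<^sub>F n in sequentially. l0 (Zs (r n) j) = l0 (Zst j)"
    by (rule l0_eventually_eq[OF Zs_r gc_pos])
qed

lemma tendsto_R_r: "yk \<longlonglongrightarrow> y \<Longrightarrow> (\<lambda>n. R (yk n) (Zs (r n)) Gm) \<longlonglongrightarrow> R y Zst Gm"
  by (rule tendsto_Rfun[OF _ Zs_r eventually_l0_Zs_r])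

lemma limit_value: "L xst + R xst Zst Gmst = lim obj"
proof -
  have "(\<lambda>n. L (xs (r n)) + R (xs (r n)) (Zs (r n)) Gmst) \<longlonglongrightarrow> L xst + R xst Zst Gmst"
    by (intro tendsto_add isCont_tendsto_compose[OF isCont_L xs_r] tendsto_R_r xs_r)
  moreover have "\<forall>\<^sub>F n in sequentially. L (xs (r n)) + R (xs (r n)) (Zs (r n)) Gmst = obj (r n)"
    using Gs_r by eventually_elim (simp add: obj_def)
  ultimately have "(\<lambda>n. obj (r n)) \<longlonglongrightarrow> L xst + R xst Zst Gmst"
    by (rule Lim_transform_eventually)
  moreover have "(\<lambda>n. obj (r n)) \<longlonglongrightarrow> lim obj"
    using LIMSEQ_subseq_LIMSEQ[OF obj_tendsto r] by (simp add: o_def)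
  ultimately show ?thesis by (rule LIMSEQ_unique)
qed

lemma limit_Z_Gamma_minimizes: "R xst Zst Gmst \<le> R xst Z Gm"
proof (rule tendsto_le[OF trivial_limit_sequentially])
  show "(\<lambda>n. R (xs (r n)) Z Gm) \<longlonglongrightarrow> R xst Z Gm"
    by (rule tendsto_Rfun[OF xs_r]) auto
  show "(\<lambda>n. R (xs (r n)) (Zs (r n)) Gmst) \<longlonglongrightarrow> R xst Zst Gmst"
    by (rule tendsto_R_r[OF xs_r])
  show "\<forall>\<^sub>F n in sequentially. R (xs (r n)) (Zs (r n)) Gmst \<le> R (xs (r n)) Z Gm"
    using eventually_conj[OF Gs_r eventually_r_pos]
  proof (rule eventually_mono)
    fix n assume "Gs (r n) = Gmst \<and> 0 < r n"
    then show "R (xs (r n)) (Zs (r n)) Gmst \<le> R (xs (r n)) Z Gm"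
      using Z_Gamma_update_minimizes[of "r n" Z Gm] by simp
  qed
qed

lemma limit_x_minimizes_surrogate:
  assumes "y \<in> X"
  shows "surrogate xst xst + R xst Zst Gmst \<le> surrogate xst y + R y Zst Gmst"
proof (rule tendsto_le[OF trivial_limit_sequentially])
  show "(\<lambda>n. surrogate (xs (r n)) y + R y (Zs (r n)) Gmst) \<longlonglongrightarrow> surrogate xst y + R y Zst Gmst"
    by (intro tendsto_add tendsto_surrogate[OF xs_r tendsto_const xs_in_X limit_in_X]
        tendsto_R_r tendsto_const)
  show "(\<lambda>n. surrogate (xs (r n)) (xs (Suc (r n))) + R (xs (Suc (r n))) (Zs (r n)) Gmst)
      \<longlonglongrightarrow> surrogate xst xst + R xst Zst Gmst"
    by (intro tendsto_add tendsto_surrogate[OF xs_r xs_Suc_r_tendsto xs_in_X limit_in_X]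
        tendsto_R_r xs_Suc_r_tendsto)
  show "\<forall>\<^sub>F n in sequentially. surrogate (xs (r n)) (xs (Suc (r n))) + R (xs (Suc (r n))) (Zs (r n)) Gmst
      \<le> surrogate (xs (r n)) y + R y (Zs (r n)) Gmst"
    using Gs_r
  proof (rule eventually_mono)
    fix n assume "Gs (r n) = Gmst"
    then show "surrogate (xs (r n)) (xs (Suc (r n))) + R (xs (Suc (r n))) (Zs (r n)) Gmst
        \<le> surrogate (xs (r n)) y + R y (Zs (r n)) Gmst"
      using x_update_minimizes[OF assms, of "r n"] by simp
  qed
qed

lemma limit_x_critical: "0 \<in> frechet_subdiff (\<lambda>x. G x Zst Gmst) xst"
proof (rule zero_in_frechet_subdiffI)
  show "G xst Zst Gmst = ereal (L xst + R xst Zst Gmst)"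
    using limit_in_X by (simp add: Gobj_def)
  show "((\<lambda>y. surrogate xst y - L y) has_derivative (\<lambda>_. 0)) (at xst)"
    by (rule surrogate_minus_L_has_derivative)
  show "surrogate xst xst - L xst = 0" by (simp add: surrogate_self)
  show "G xst Zst Gmst \<le> G y Zst Gmst + ereal (surrogate xst y - L y)" for y
    using limit_in_X limit_x_minimizes_surrogate[of y] by (auto simp: Gobj_def surrogate_self)
qed

end

lemma accum_pt_value:
  assumes "is_accum_pt xs Zs Gs xst Zst Gmst"
  shows "G xst Zst Gmst = ereal (lim obj)"
proof -
  obtain r where "strict_mono r" "(\<lambda>n. xs (r n)) \<longlonglongrightarrow> xst" "\<And>j. (\<lambda>n. Zs (r n) j) \<longlonglongrightarrow> Zst j"
    "\<forall>\<^sub>F n in sequentially. Gs (r n) = Gmst"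
    using assms unfolding is_accum_pt_def by blast
  from limit_in_X[OF this] limit_value[OF this] show ?thesis by (simp add: Gobj_def)
qed

lemma accum_pt_partial_optimal:
  assumes "is_accum_pt xs Zs Gs xst Zst Gmst"
  shows "0 \<in> limiting_subdiff (\<lambda>x. G x Zst Gmst) xst \<and> (\<forall>Z Gm. G xst Zst Gmst \<le> G xst Z Gm)"
proof -
  obtain r where "strict_mono r" "(\<lambda>n. xs (r n)) \<longlonglongrightarrow> xst" "\<And>j. (\<lambda>n. Zs (r n) j) \<longlonglongrightarrow> Zst j"
    "\<forall>\<^sub>F n in sequentially. Gs (r n) = Gmst"
    using assms unfolding is_accum_pt_def by blast
  note limit = limit_in_X[OF this] limit_x_critical[OF this] limit_Z_Gamma_minimizes[OF this]
  show ?thesis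
  proof
    show "0 \<in> limiting_subdiff (\<lambda>x. G x Zst Gmst) xst"
      using frechet_subdiff_subset_limiting_subdiff limit(2) by blast
    show "\<forall>Z Gm. G xst Zst Gmst \<le> G xst Z Gm"
      using limit(1,3) by (simp add: Gobj_def)
  qed
qed

end

theorem theorem1:
  fixes A :: "real^'p::finite^'d::finite"
    and I0 sigma2 xmax beta gc :: real
    and Y s1 s2 :: "'d \<Rightarrow> real"
    and c :: "'d \<Rightarrow> real \<Rightarrow> real"
    and P :: "'j::finite \<Rightarrow> real^'p^'v::finite"
    and Om :: "'k::finite \<Rightarrow> real^'v^'v"
    and tau :: "'j \<Rightarrow> real"
    and xs :: "nat \<Rightarrow> real^'p"
    and Zs :: "nat \<Rightarrow> 'j \<Rightarrow> real^'v"
    and Gs :: "nat \<Rightarrow> 'j \<Rightarrow> 'k"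
  defines "G \<equiv> Gobj I0 sigma2 Y s1 s2 A beta gc tau P Om xmax"
    and "F \<equiv> Fmaj I0 sigma2 Y s1 s2 c A beta gc tau P Om xmax"
    and "h \<equiv> (\<lambda>i. hfun I0 sigma2 (Y i) (s1 i) (s2 i))"
  assumes A_nonneg: "\<forall>i q. 0 \<le> A $ i $ q"
    and I0_pos: "I0 > 0" and sigma2_nonneg: "sigma2 \<ge> 0" and xmax_pos: "xmax > 0"
    and beta_pos: "beta > 0" and gc_pos: "gc > 0" and tau_pos: "\<forall>j. tau j > 0"
    and P_rows: "\<forall>j r. \<exists>q. P j $ r = axis q 1"
    and P_distinct: "\<forall>j. inj (\<lambda>r. P j $ r)"
    and P_cover: "\<forall>q. \<exists>j r. P j $ r = axis q 1"
    and Om_inv: "\<forall>k. invertible (Om k)"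
    and c_cont: "\<forall>i. continuous_on {0..} (c i)"
    and c_pos: "\<forall>i l. 0 \<le> l \<longrightarrow> c i l > 0"
    and c_maj: "\<forall>i l lb. 0 \<le> l \<longrightarrow> 0 \<le> lb \<longrightarrow> h i l \<le> qsurr (h i) (c i) l lb"
    and init: "xs 0 \<in> Xset xmax"
    and x_update: "\<forall>n y. F (xs (Suc n)) (Zs n) (Gs n) (xs n) \<le> F y (Zs n) (Gs n) (xs n)"
    and Gamma_update: "\<forall>n j k. clustcost gc P Om (xs (Suc n)) j (Gs (Suc n) j)
                                \<le> clustcost gc P Om (xs (Suc n)) j k"
    and Z_update: "\<forall>n j. Zs (Suc n) j = hardthr gc (Om (Gs (Suc n) j) *v (P j *v xs (Suc n)))"
  shows "(bounded (range xs) \<and> (\<forall>j. bounded (range (\<lambda>n. Zs n j))))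
    \<and> (\<forall>n. G (xs (Suc n)) (Zs (Suc n)) (Gs (Suc n)) \<le> G (xs n) (Zs n) (Gs n))
    \<and> (\<exists>Gst::real. (\<lambda>n. G (xs n) (Zs n) (Gs n)) \<longlonglongrightarrow> ereal Gst \<and>
           (\<forall>xst Zst Gmst. is_accum_pt xs Zs Gs xst Zst Gmst \<longrightarrow> G xst Zst Gmst = ereal Gst))
    \<and> (\<forall>xst Zst Gmst. is_accum_pt xs Zs Gs xst Zst Gmst \<longrightarrow>
           0 \<in> limiting_subdiff (\<lambda>x. G x Zst Gmst) xst \<and>
           (\<forall>Z Gm. G xst Zst Gmst \<le> G xst Z Gm))
    \<and> ((\<lambda>n. norm (xs (Suc n) - xs n)) \<longlonglongrightarrow> 0)"
proof -
  interpret spultra_iteration A I0 sigma2 xmax beta gc Y s1 s2 c P Om tau xs Zs Gs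
    using A_nonneg I0_pos sigma2_nonneg xmax_pos beta_pos gc_pos tau_pos P_cover Om_inv c_cont c_pos
      c_maj init x_update Gamma_update Z_update
    by unfold_locales (auto simp: F_def h_def less_imp_le)
  have "(\<lambda>n. G (xs n) (Zs n) (Gs n)) \<longlonglongrightarrow> ereal (lim obj)"
    using obj_tendsto by (simp add: G_def G_iterate)
  moreover have "G (xs (Suc n)) (Zs (Suc n)) (Gs (Suc n)) \<le> G (xs n) (Zs n) (Gs n)" for n
    using obj_decreasing by (simp add: G_def G_iterate)
  ultimately show ?thesis
    using bounded_xs bounded_Zs step_tendsto_zero accum_pt_value accum_pt_partial_optimal
    unfolding G_def by blast
qed

end
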